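(* Let $(X,\mathscr B,\mu,T)$ be a measure-preserving system and fix the system of coefficients $c_S^n=2^{-n}$. Then $\sup_\alpha\operatorname{Int}_\mu(X,\alpha,T)=h_\mu(X,T)$, the supremum being over finite measurable partitions $\alpha$ of $X$.
   Context: A measure-preserving system is a complete probability space $(X,\mathscr B,\mu)$ with a bijection $T$, $T$ and $T^{-1}$ measurable and $\mu$-preserving. Notation: $n^*=\{0,\dots,n-1\}$, $S^c=n^*\setminus S$, $\alpha_S=\bigvee_{i\in S}T^{-i}\alpha$, $H_\mu$ the Shannon entropy of a partition. The measure-theoretic intricacy is $\operatorname{Int}_\mu(X,\alpha,T)=\lim_{n\to\infty}\frac1n\sum_{S\subset n^*}c_S^n\big[H_\mu(\alpha_S)+H_\mu(\alpha_{S^c})-H_\mu(\alpha_{n^*})\big]$ (the limit exists). $h_\mu(X,T)$ is the usual measure-theoretic entropy. *)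

theory Defs
  imports "HOL-Analysis.Analysis" "HOL-Probability.Probability"
begin

definition mps :: "'a measure \<Rightarrow> ('a \<Rightarrow> 'a) \<Rightarrow> bool" where
  "mps M T \<longleftrightarrow> prob_space M \<and> complete_measure M
     \<and> bij_betw T (space M) (space M)
     \<and> T \<in> M \<rightarrow>\<^sub>M M \<and> inv_into (space M) T \<in> M \<rightarrow>\<^sub>M M
     \<and> distr M M T = M \<and> distr M M (inv_into (space M) T) = M"

definition fin_meas_partition :: "'a measure \<Rightarrow> 'a set set \<Rightarrow> bool" where
  "fin_meas_partition M \<alpha> \<longleftrightarrow> finite \<alpha> \<and> \<alpha> \<subseteq> sets M \<and> disjoint \<alpha> \<and> \<Union>\<alpha> = space M"

text \<open>Shannon entropy of a partition (natural logarithm, 0 log 0 = 0).\<close>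
definition part_entropy :: "'a measure \<Rightarrow> 'a set set \<Rightarrow> real" where
  "part_entropy M P = - (\<Sum>A\<in>P. measure M A * ln (measure M A))"

text \<open>The join alpha_S of the partitions T^{-i} alpha, i in S (trivial partition if S is empty).\<close>
definition join_part :: "'a measure \<Rightarrow> ('a \<Rightarrow> 'a) \<Rightarrow> 'a set set \<Rightarrow> nat set \<Rightarrow> 'a set set" where
  "join_part M T \<alpha> S = {space M \<inter> (\<Inter>i\<in>S. (T ^^ i) -` (f i)) | f. f \<in> S \<rightarrow>\<^sub>E \<alpha>}"

text \<open>Measure-theoretic intricacy with respect to a system of coefficients c n S = c_S^n.\<close>
definition intricacy :: "'a measure \<Rightarrow> ('a \<Rightarrow> 'a) \<Rightarrow> (nat \<Rightarrow> nat set \<Rightarrow> real) \<Rightarrow> 'a set set \<Rightarrow> real" where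
  "intricacy M T c \<alpha> = lim (\<lambda>n. (1 / real n) * (\<Sum>S\<in>Pow {0..<n}. c n S *
      (part_entropy M (join_part M T \<alpha> S) + part_entropy M (join_part M T \<alpha> ({0..<n} - S))
       - part_entropy M (join_part M T \<alpha> {0..<n}))))"

definition part_dyn_entropy :: "'a measure \<Rightarrow> ('a \<Rightarrow> 'a) \<Rightarrow> 'a set set \<Rightarrow> real" where
  "part_dyn_entropy M T \<alpha> = lim (\<lambda>n. part_entropy M (join_part M T \<alpha> {0..<n}) / real n)"

definition ks_entropy :: "'a measure \<Rightarrow> ('a \<Rightarrow> 'a) \<Rightarrow> ereal" where
  "ks_entropy M T = (SUP \<alpha>\<in>{\<alpha>. fin_meas_partition M \<alpha>}. ereal (part_dyn_entropy M T \<alpha>))"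

end

theory Submission
  imports Defs
begin

text \<open>
  Write H(S) for the entropy of the join of the partitions T^-i \<alpha>, i \<in> S. Viewing this join
  through the itinerary x \<mapsto> (cell of T^i x)_{i \<in> S}, the set function H is monotone,
  subadditive and shift invariant. With coefficients 2^-n the n-th term of the intricacy is
  2 F(n) / n - H({0..<n}) / n, where F(n) is the mean of H(S) over uniformly random subsets
  S \<subseteq> {0..<n}; both F and n \<mapsto> H({0..<n}) are subadditive, so by Fekete's lemma the
  intricacy is 2 f - h with f \<le> h = h(T, \<alpha>).

  Conversely, for \<beta> the join of \<alpha> over {0..<k}, H_\<beta>(S) = H_\<alpha>(S + {0..<k}). A random
  S widened by k misses only about n / 2^k points of {0..<n}, each costing at most H_\<alpha>({0}),
  so f_\<beta> \<ge> h(T, \<alpha>) - H_\<alpha>({0}) / 2^k, while h(T, \<beta>) \<le> h(T, \<alpha>). Hence the intricacy of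
  \<beta> is at least h(T, \<alpha>) - 2 H_\<alpha>({0}) / 2^k.
\<close>

section \<open>Fekete's lemma and approximation of suprema\<close>

lemma subadditive_multiple_le:
  fixes u :: "nat \<Rightarrow> real"
  assumes "\<And>m n. u (m + n) \<le> u m + u n"
  shows "u (q * m + r) \<le> real q * u m + u r"
proof (induction q)
  case (Suc q)
  have "u (Suc q * m + r) \<le> u m + u (q * m + r)"
    using assms[of m "q * m + r"] by (simp add: add.assoc)
  with Suc show ?case by (simp add: algebra_simps)
qed simp

lemma subadditive_quotient_le:
  fixes u :: "nat \<Rightarrow> real"
  assumes nonneg: "\<And>n. 0 \<le> u n" and sub: "\<And>m n. u (m + n) \<le> u m + u n"
    and "1 \<le> m" "1 \<le> n"
  shows "u n / real n \<le> u m / real m + (\<Sum>r<m. u r) / real n"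
proof -
  have "u n \<le> real (n div m) * u m + u (n mod m)"
    using subadditive_multiple_le[OF sub, of "n div m" m "n mod m"] by simp
  also have "real (n div m) * u m \<le> real n * (u m / real m)"
  proof -
    have "real (n div m) * real m \<le> real n"
      by (metis div_times_less_eq_dividend of_nat_le_iff of_nat_mult)
    then have "(real (n div m) * real m) * (u m / real m) \<le> real n * (u m / real m)"
      using nonneg[of m] by (intro mult_right_mono) auto
    then show ?thesis using \<open>1 \<le> m\<close> by simp
  qed
  also have "u (n mod m) \<le> (\<Sum>r<m. u r)"
    using \<open>1 \<le> m\<close> by (intro member_le_sum nonneg) auto
  finally show ?thesis
    using \<open>1 \<le> n\<close> by (simp add: field_simps)
qed

lemma fekete:
  fixes u :: "nat \<Rightarrow> real"
  assumes nonneg: "\<And>n. 0 \<le> u n" and sub: "\<And>m n. u (m + n) \<le> u m + u n"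
  shows "(\<lambda>n. u n / real n) \<longlonglongrightarrow> (INF n\<in>{1..}. u n / real n)"
proof (rule LIMSEQ_I)
  define L where "L = (INF n\<in>{1..}. u n / real n)"
  have bdd: "bdd_below ((\<lambda>n. u n / real n) ` {1..})"
    by (rule bdd_belowI[of _ 0]) (auto intro: divide_nonneg_nonneg nonneg)
  fix e :: real assume e: "0 < e"
  have "L < L + e / 2" using e by simp
  then obtain m where m: "m \<ge> 1" "u m / real m < L + e / 2"
    unfolding L_def by (subst (asm) cINF_less_iff[OF _ bdd]) auto
  define C where "C = (\<Sum>r<m. u r)"
  obtain N :: nat where N: "C / (e / 2) < real N"
    using reals_Archimedean2 by blast
  show "\<exists>N. \<forall>n\<ge>N. norm (u n / real n - L) < e"
  proof (intro exI[of _ "Suc N"] allI impI)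
    fix n assume n: "Suc N \<le> n"
    have "C < e / 2 * real N" using N e by (simp add: divide_less_eq mult.commute)
    also have "\<dots> \<le> e / 2 * real n" using n e by simp
    finally have "C / real n < e / 2"
      using n by (simp add: divide_less_eq mult.commute)
    then have "u n / real n < L + e"
      using subadditive_quotient_le[OF nonneg sub m(1), of n] m(2) n unfolding C_def by linarith
    moreover have "L \<le> u n / real n"
      unfolding L_def by (rule cINF_lower[OF bdd]) (use n in auto)
    ultimately show "norm (u n / real n - L) < e" by simp
  qed
qed

lemma SUP_ereal_eq_if_approximates:
  fixes f g :: "'b \<Rightarrow> real"
  assumes le: "\<And>x. x \<in> A \<Longrightarrow> f x \<le> g x"
    and approx: "\<And>x e. x \<in> A \<Longrightarrow> 0 < e \<Longrightarrow> \<exists>y\<in>A. g x < f y + e"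
  shows "(SUP x\<in>A. ereal (f x)) = (SUP x\<in>A. ereal (g x))"
proof (rule antisym)
  show "(SUP x\<in>A. ereal (f x)) \<le> (SUP x\<in>A. ereal (g x))"
    by (rule SUP_mono) (use le in auto)
  show "(SUP x\<in>A. ereal (g x)) \<le> (SUP x\<in>A. ereal (f x))"
  proof (rule SUP_least, rule ereal_le_epsilon2)
    fix x and e :: real assume "x \<in> A" "0 < e"
    then obtain y where "y \<in> A" "g x < f y + e" using approx by blast
    then have "ereal (g x) \<le> ereal (f y) + ereal e" by simp
    also have "\<dots> \<le> (SUP x\<in>A. ereal (f x)) + ereal e"
      using \<open>y \<in> A\<close> by (intro add_right_mono SUP_upper)
    finally show "ereal (g x) \<le> (SUP x\<in>A. ereal (f x)) + ereal e" .
  qed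
qed

section \<open>Uniform averages over the subsets of an interval\<close>

definition subset_mean :: "(nat set \<Rightarrow> real) \<Rightarrow> nat \<Rightarrow> real" where
  "subset_mean h n = (\<Sum>S\<in>Pow {0..<n}. 2 powr (- real n) * h S)"

lemma sum_Pow_uniform_weight: "(\<Sum>S\<in>Pow {0..<n}. (2::real) powr (- real n)) = 1"
  by (simp add: card_Pow powr_minus powr_realpow)

lemma subset_mean_const: "subset_mean (\<lambda>_. c) n = c"
  unfolding subset_mean_def using sum_Pow_uniform_weight[of n]
  by (simp add: sum_distrib_right[symmetric])

lemma subset_mean_mono:
  assumes "\<And>S. S \<subseteq> {0..<n} \<Longrightarrow> h S \<le> g S"
  shows "subset_mean h n \<le> subset_mean g n"
  unfolding subset_mean_def using assms by (intro sum_mono mult_left_mono) auto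

lemma subset_mean_diff: "subset_mean (\<lambda>S. h S - g S) n = subset_mean h n - subset_mean g n"
  unfolding subset_mean_def by (simp add: right_diff_distrib sum_subtractf)

lemma subset_mean_complement: "subset_mean (\<lambda>S. h ({0..<n} - S)) n = subset_mean h n"
proof -
  have "bij_betw (\<lambda>S. {0..<n} - S) (Pow {0..<n}) (Pow {0..<n})"
    by (rule bij_betw_byWitness[where f'="\<lambda>S. {0..<n} - S"]) auto
  then show ?thesis
    unfolding subset_mean_def by (rule sum.reindex_bij_betw)
qed

lemma bij_betw_Pow_atLeastLessThan_add:
  "bij_betw (\<lambda>(A, B). A \<union> (+) m ` B) (Pow {0..<m} \<times> Pow {0..<n}) (Pow {0..<m + n :: nat})"
proof (rule bij_betw_byWitness[where f'="\<lambda>C. (C \<inter> {0..<m}, (\<lambda>i. i - m) ` (C - {0..<m}))"])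
  show "(\<lambda>C. (C \<inter> {0..<m}, (\<lambda>i. i - m) ` (C - {0..<m}))) ` Pow {0..<m + n} \<subseteq> Pow {0..<m} \<times> Pow {0..<n}"
    by auto
  show "(\<lambda>(A, B). A \<union> (+) m ` B) ` (Pow {0..<m} \<times> Pow {0..<n}) \<subseteq> Pow {0..<m + n}"
    by auto
  show "\<forall>p\<in>Pow {0..<m} \<times> Pow {0..<n}.
      (\<lambda>C. (C \<inter> {0..<m}, (\<lambda>i. i - m) ` (C - {0..<m}))) ((\<lambda>(A, B). A \<union> (+) m ` B) p) = p"
    by (force simp: image_image)
  show "\<forall>C\<in>Pow {0..<m + n}. (\<lambda>(A, B). A \<union> (+) m ` B) (C \<inter> {0..<m}, (\<lambda>i. i - m) ` (C - {0..<m})) = C"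
  proof
    fix C assume "C \<in> Pow {0..<m + n}"
    have "i \<in> (+) m ` (\<lambda>i. i - m) ` (C - {0..<m})" if "i \<in> C" "m \<le> i" for i
    proof (rule image_eqI[of _ _ "i - m"])
      show "i - m \<in> (\<lambda>i. i - m) ` (C - {0..<m})" using that by auto
    qed (use that in simp)
    then show "(\<lambda>(A, B). A \<union> (+) m ` B) (C \<inter> {0..<m}, (\<lambda>i. i - m) ` (C - {0..<m})) = C"
      by (auto simp: not_less[symmetric]) blast
  qed
qed

definition widen :: "nat set \<Rightarrow> nat \<Rightarrow> nat set" where
  "widen S k = (\<Union>i\<in>S. (+) i ` {0..<k})"

lemma mem_widen_iff: "m \<in> widen S k \<longleftrightarrow> (\<exists>i\<in>S. i \<le> m \<and> m < i + k)"
proof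
  assume "\<exists>i\<in>S. i \<le> m \<and> m < i + k"
  then obtain i where "i \<in> S" "i \<le> m" "m < i + k" by blast
  then show "m \<in> widen S k"
    unfolding widen_def by (intro UN_I[of i] image_eqI[of _ _ "m - i"]) auto
qed (auto simp: widen_def)

lemma finite_widen: "finite S \<Longrightarrow> finite (widen S k)"
  unfolding widen_def by simp

lemma widen_empty [simp]: "widen {} k = {}"
  unfolding widen_def by simp

lemma widen_Un: "widen (A \<union> B) k = widen A k \<union> widen B k"
  unfolding widen_def by blast

lemma widen_mono: "A \<subseteq> B \<Longrightarrow> widen A k \<subseteq> widen B k"
  unfolding widen_def by blast

lemma widen_shift: "widen ((+) m ` S) k = (+) m ` widen S k"
  unfolding widen_def image_UN image_image by (simp add: add.assoc)

lemma widen_atLeastLessThan_subset: "widen {0..<n} k \<subseteq> {0..<n} \<union> (+) n ` {0..<k}"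
proof
  fix m assume "m \<in> widen {0..<n} k"
  then have "m < n + k" by (auto simp: mem_widen_iff)
  then show "m \<in> {0..<n} \<union> (+) n ` {0..<k}"
    by (cases "m < n") (auto intro: image_eqI[of _ _ "m - n"])
qed

text \<open>For m \<ge> k the window {m - k + 1..m} lies in {0..<n}, so a uniformly random
  S \<subseteq> {0..<n} avoids it with probability 2^-k.\<close>
lemma subset_mean_avoids_window:
  assumes "m < n"
  shows "subset_mean (\<lambda>S. of_bool (S \<inter> {i. i \<le> m \<and> m < i + k} = {})) n \<le> of_bool (m < k) + 1 / 2 ^ k"
proof -
  define W where "W = {i. i \<le> m \<and> m < i + k}"
  have "Pow {0..<n} \<inter> {S. S \<inter> W = {}} = Pow ({0..<n} - W)" by auto
  then have "subset_mean (\<lambda>S. of_bool (S \<inter> W = {})) n = 2 powr (- real n) * card (Pow ({0..<n} - W))"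
    unfolding subset_mean_def by (simp flip: sum_distrib_left)
  also have "\<dots> = 2 ^ card ({0..<n} - W) / 2 ^ n"
    by (simp add: card_Pow powr_minus_divide powr_realpow)
  also have "\<dots> \<le> of_bool (m < k) + 1 / 2 ^ k"
  proof (cases "m < k")
    case True
    have "card ({0..<n} - W) \<le> n"
      by (metis card_atLeastLessThan card_mono Diff_subset finite_atLeastLessThan diff_zero)
    then have "(2::real) ^ card ({0..<n} - W) \<le> 2 ^ n" by (intro power_increasing) auto
    then have "(2::real) ^ card ({0..<n} - W) / 2 ^ n \<le> 1" by simp
    with True show ?thesis by (simp add: add_increasing2)
  next
    case False
    then have "W = {m + 1 - k..m}" unfolding W_def by auto
    then have "W \<subseteq> {0..<n}" "card W = k" using False assms by auto
    then have "card ({0..<n} - W) = n - k" and "k \<le> n"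
      using False assms by (auto simp: card_Diff_subset finite_subset)
    with False show ?thesis by (simp add: power_diff)
  qed
  finally show ?thesis unfolding W_def .
qed

lemma subset_mean_card_uncovered:
  "subset_mean (\<lambda>S. real (card ({0..<n} - widen S k))) n \<le> real k + real n / 2 ^ k"
proof -
  have card_uncovered:
    "real (card ({0..<n} - widen S k)) = (\<Sum>m<n. of_bool (S \<inter> {i. i \<le> m \<and> m < i + k} = {}))" for S
  proof -
    have "{0..<n} - widen S k = {..<n} \<inter> {m. S \<inter> {i. i \<le> m \<and> m < i + k} = {}}"
      by (auto simp: mem_widen_iff)
    then show ?thesis by simp
  qed
  have "subset_mean (\<lambda>S. real (card ({0..<n} - widen S k))) n
      = (\<Sum>m<n. subset_mean (\<lambda>S. of_bool (S \<inter> {i. i \<le> m \<and> m < i + k} = {})) n)"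
    unfolding subset_mean_def card_uncovered sum_distrib_left by (rule sum.swap)
  also have "\<dots> \<le> (\<Sum>m<n. of_bool (m < k) + 1 / 2 ^ k)"
    by (intro sum_mono subset_mean_avoids_window) simp
  also have "\<dots> = real (card ({..<n} \<inter> {..<k})) + real n / 2 ^ k"
    by (simp add: sum.distrib Int_def)
  also have "real (card ({..<n} \<inter> {..<k})) \<le> real k"
    by (simp add: card_mono[of "{..<k}", simplified])
  finally show ?thesis by simp
qed

definition block_rate :: "(nat set \<Rightarrow> real) \<Rightarrow> real" where
  "block_rate h = lim (\<lambda>n. h {0..<n} / real n)"

definition mean_rate :: "(nat set \<Rightarrow> real) \<Rightarrow> real" where
  "mean_rate h = lim (\<lambda>n. subset_mean h n / real n)"

lemma subset_mean_add: "subset_mean (\<lambda>S. h S + g S) n = subset_mean h n + subset_mean g n"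
  unfolding subset_mean_def by (simp add: distrib_left sum.distrib)

lemma subset_mean_scale: "subset_mean (\<lambda>S. c * h S) n = c * subset_mean h n"
  unfolding subset_mean_def by (simp add: sum_distrib_left ac_simps)

lemma intricacy_term_eq:
  "(1 / real n) * (\<Sum>S\<in>Pow {0..<n}. 2 powr (- real n) * (h S + h ({0..<n} - S) - h {0..<n}))
     = 2 * (subset_mean h n / real n) - h {0..<n} / real n"
proof -
  have "(\<Sum>S\<in>Pow {0..<n}. 2 powr (- real n) * (h S + h ({0..<n} - S) - h {0..<n}))
      = subset_mean (\<lambda>S. h S + h ({0..<n} - S) - h {0..<n}) n"
    by (simp add: subset_mean_def)
  also have "\<dots> = 2 * subset_mean h n - h {0..<n}"
    by (simp add: subset_mean_diff subset_mean_add subset_mean_const subset_mean_complement)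
  finally show ?thesis by (simp add: diff_divide_distrib)
qed

section \<open>Stationary subadditive set functions\<close>

locale stationary_subadditive =
  fixes h :: "nat set \<Rightarrow> real"
  assumes empty [simp]: "h {} = 0"
    and mono: "finite B \<Longrightarrow> A \<subseteq> B \<Longrightarrow> h A \<le> h B"
    and subadditive: "finite A \<Longrightarrow> finite B \<Longrightarrow> h (A \<union> B) \<le> h A + h B"
    and shift_invariant: "finite A \<Longrightarrow> h ((+) k ` A) = h A"
begin

lemma nonneg: "finite A \<Longrightarrow> 0 \<le> h A"
  using mono[of A "{}"] by simp

lemma le_card_mult: "finite R \<Longrightarrow> h R \<le> real (card R) * h {0}"
proof (induction R rule: finite_induct)
  case (insert r R)
  have "h (insert r R) \<le> h {r} + h R"
    using subadditive[of "{r}" R] insert.hyps by simp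
  also have "h {r} = h {0}"
    using shift_invariant[of "{0}" r] by simp
  finally show ?case using insert by (simp add: algebra_simps)
qed simp

lemma atLeastLessThan_subadditive: "h {0..<m + n} \<le> h {0..<m} + h {0..<n}"
proof -
  have "{0..<m + n} = {0..<m} \<union> (+) m ` {0..<n}"
    by (simp add: ivl_disj_un_two(3) add.commute)
  then show ?thesis
    using subadditive[of "{0..<m}" "(+) m ` {0..<n}"] shift_invariant[of "{0..<n}" m] by simp
qed

lemma subset_mean_subadditive: "subset_mean h (m + n) \<le> subset_mean h m + subset_mean h n"
proof -
  define c :: "nat \<Rightarrow> real" where "c n = 2 powr (- real n)" for n
  have c_add: "c (m + n) = c m * c n"
    unfolding c_def by (simp add: powr_add[symmetric])
  have "subset_mean h (m + n)
      = (\<Sum>p\<in>Pow {0..<m} \<times> Pow {0..<n}. c (m + n) * h ((\<lambda>(A, B). A \<union> (+) m ` B) p))"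
    unfolding subset_mean_def c_def by (rule sum.reindex_bij_betw[OF bij_betw_Pow_atLeastLessThan_add, symmetric])
  also have "\<dots> = (\<Sum>(A, B)\<in>Pow {0..<m} \<times> Pow {0..<n}. c (m + n) * h (A \<union> (+) m ` B))"
    by (rule sum.cong) auto
  also have "\<dots> \<le> (\<Sum>(A, B)\<in>Pow {0..<m} \<times> Pow {0..<n}. c m * h A * c n + c m * (c n * h B))"
  proof (rule sum_mono, clarify)
    fix A B assume "A \<subseteq> {0..<m}" "B \<subseteq> {0..<n}"
    then have "finite A" "finite B" by (auto intro: finite_subset)
    then have "h (A \<union> (+) m ` B) \<le> h A + h B"
      using subadditive[of A "(+) m ` B"] shift_invariant[of B m] by simp
    then have "c (m + n) * h (A \<union> (+) m ` B) \<le> c (m + n) * (h A + h B)"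
      by (intro mult_left_mono) (simp_all add: c_def)
    then show "c (m + n) * h (A \<union> (+) m ` B) \<le> c m * h A * c n + c m * (c n * h B)"
      by (simp add: c_add algebra_simps)
  qed
  also have "\<dots> = subset_mean h m * (\<Sum>B\<in>Pow {0..<n}. c n) + (\<Sum>A\<in>Pow {0..<m}. c m) * subset_mean h n"
    unfolding subset_mean_def c_def sum.cartesian_product[symmetric]
    by (simp add: sum.distrib sum_distrib_left sum_distrib_right mult_ac)
  also have "\<dots> = subset_mean h m + subset_mean h n"
    using sum_Pow_uniform_weight unfolding c_def by simp
  finally show ?thesis .
qed

lemma subset_mean_nonneg: "0 \<le> subset_mean h n"
  using subset_mean_mono[of n "\<lambda>_. 0" h] nonneg finite_subset by (auto simp: subset_mean_const)

lemma subset_mean_le: "subset_mean h n \<le> h {0..<n}"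
  using subset_mean_mono[of n h "\<lambda>_. h {0..<n}"] mono by (auto simp: subset_mean_const)

lemma block_rate: "(\<lambda>n. h {0..<n} / real n) \<longlonglongrightarrow> block_rate h"
  unfolding block_rate_def
  using fekete[of "\<lambda>n. h {0..<n}"] nonneg atLeastLessThan_subadditive
  by (intro convergent_LIMSEQ_iff[THEN iffD1] convergentI) auto

lemma mean_rate: "(\<lambda>n. subset_mean h n / real n) \<longlonglongrightarrow> mean_rate h"
  unfolding mean_rate_def
  using fekete[of "subset_mean h"] subset_mean_nonneg subset_mean_subadditive
  by (intro convergent_LIMSEQ_iff[THEN iffD1] convergentI) auto

lemma mean_rate_le_block_rate: "mean_rate h \<le> block_rate h"
  by (rule LIMSEQ_le[OF mean_rate block_rate]) (auto intro!: exI[of _ 0] divide_right_mono subset_mean_le)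

lemma intricacy_term_LIMSEQ:
  "(\<lambda>n. (1 / real n) * (\<Sum>S\<in>Pow {0..<n}. 2 powr (- real n) * (h S + h ({0..<n} - S) - h {0..<n})))
     \<longlonglongrightarrow> 2 * mean_rate h - block_rate h"
  unfolding intricacy_term_eq by (intro tendsto_intros mean_rate block_rate)

lemma stationary_subadditive_widen: "stationary_subadditive (\<lambda>S. h (widen S k))"
proof
  show "h (widen {} k) = 0" by simp
  show "h (widen A k) \<le> h (widen B k)" if "finite B" "A \<subseteq> B" for A B
    using that by (intro mono finite_widen widen_mono)
  show "h (widen (A \<union> B) k) \<le> h (widen A k) + h (widen B k)" if "finite A" "finite B" for A B
    unfolding widen_Un using that by (intro subadditive finite_widen)
  show "h (widen ((+) m ` A) k) = h (widen A k)" if "finite A" for A m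
    unfolding widen_shift using that by (intro shift_invariant finite_widen)
qed

lemma block_rate_widen_le: "block_rate (\<lambda>S. h (widen S k)) \<le> block_rate h"
proof -
  interpret widened: stationary_subadditive "\<lambda>S. h (widen S k)"
    by (rule stationary_subadditive_widen)
  have "h (widen {0..<n} k) \<le> h {0..<n} + h {0..<k}" for n
  proof -
    have "h (widen {0..<n} k) \<le> h ({0..<n} \<union> (+) n ` {0..<k})"
      by (intro mono widen_atLeastLessThan_subset) auto
    also have "\<dots> \<le> h {0..<n} + h ((+) n ` {0..<k})"
      by (intro subadditive) auto
    also have "h ((+) n ` {0..<k}) = h {0..<k}"
      by (rule shift_invariant) simp
    finally show ?thesis .
  qed
  then have "h (widen {0..<n} k) / real n \<le> h {0..<n} / real n + h {0..<k} / real n" for n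
    by (simp add: divide_right_mono flip: add_divide_distrib)
  moreover have "(\<lambda>n. h {0..<n} / real n + h {0..<k} / real n) \<longlonglongrightarrow> block_rate h + 0"
    by (intro tendsto_add block_rate lim_const_over_n)
  ultimately show ?thesis
    using LIMSEQ_le[OF widened.block_rate] by simp
qed

text \<open>Each S \<subseteq> {0..<n} together with the points its widening misses covers {0..<n};
  on average only k + n / 2^k points are missed.\<close>
lemma subset_mean_widen_ge:
  "h {0..<n} - h {0} * (real k + real n / 2 ^ k) \<le> subset_mean (\<lambda>S. h (widen S k)) n"
proof -
  have cover: "h {0..<n} - real (card ({0..<n} - widen S k)) * h {0} \<le> h (widen S k)"
    if "S \<subseteq> {0..<n}" for S
  proof -
    have S: "finite S" using that finite_subset by blast
    have "h {0..<n} \<le> h (widen S k \<union> ({0..<n} - widen S k))"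
      by (intro mono) (auto simp: finite_widen S)
    also have "\<dots> \<le> h (widen S k) + h ({0..<n} - widen S k)"
      by (intro subadditive finite_widen S) simp
    also have "h ({0..<n} - widen S k) \<le> real (card ({0..<n} - widen S k)) * h {0}"
      by (intro le_card_mult) simp
    finally show ?thesis by simp
  qed
  have "h {0..<n} - h {0} * (real k + real n / 2 ^ k)
      \<le> h {0..<n} - h {0} * subset_mean (\<lambda>S. real (card ({0..<n} - widen S k))) n"
    using subset_mean_card_uncovered nonneg[of "{0}"] by (intro diff_left_mono mult_left_mono) auto
  also have "\<dots> = subset_mean (\<lambda>S. h {0..<n} - real (card ({0..<n} - widen S k)) * h {0}) n"
    by (simp add: subset_mean_diff subset_mean_const subset_mean_scale mult.commute)
  also have "\<dots> \<le> subset_mean (\<lambda>S. h (widen S k)) n"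
    by (rule subset_mean_mono) (rule cover)
  finally show ?thesis .
qed

lemma block_rate_le_mean_rate_widen: "block_rate h - h {0} / 2 ^ k \<le> mean_rate (\<lambda>S. h (widen S k))"
proof -
  interpret widened: stationary_subadditive "\<lambda>S. h (widen S k)"
    by (rule stationary_subadditive_widen)
  have "h {0..<n} / real n - h {0} * real k / real n - h {0} / 2 ^ k
      \<le> subset_mean (\<lambda>S. h (widen S k)) n / real n" if "1 \<le> n" for n
  proof -
    have "(h {0..<n} - h {0} * (real k + real n / 2 ^ k)) / real n
        \<le> subset_mean (\<lambda>S. h (widen S k)) n / real n"
      using subset_mean_widen_ge by (rule divide_right_mono) simp
    then show ?thesis using that by (simp add: field_simps)
  qed
  moreover have "(\<lambda>n. h {0..<n} / real n - h {0} * real k / real n - h {0} / 2 ^ k)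
      \<longlonglongrightarrow> block_rate h - 0 - h {0} / 2 ^ k"
    by (intro tendsto_diff block_rate lim_const_over_n tendsto_const)
  ultimately show ?thesis
    using LIMSEQ_le[OF _ widened.mean_rate] by fastforce
qed

lemma intricacy_widen_lower_bound:
  assumes "\<And>S. finite S \<Longrightarrow> g S = h (widen S k)"
  shows "block_rate h - 2 * h {0} / 2 ^ k \<le> 2 * mean_rate g - block_rate g"
proof -
  have "block_rate g = block_rate (\<lambda>S. h (widen S k))"
    unfolding block_rate_def using assms by simp
  moreover have "subset_mean g n = subset_mean (\<lambda>S. h (widen S k)) n" for n
    unfolding subset_mean_def by (intro sum.cong) (auto intro: assms finite_subset)
  then have "mean_rate g = mean_rate (\<lambda>S. h (widen S k))"
    unfolding mean_rate_def by simp
  moreover have "2 * h {0} / 2 ^ k = 2 * (h {0} / 2 ^ k)" by simp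
  ultimately show ?thesis
    using block_rate_widen_le[of k] block_rate_le_mean_rate_widen[of k] by linarith
qed

end

section \<open>Entropy of simple functions\<close>

context information_space
begin

lemma entropy_simple_function:
  assumes "simple_function M X"
  shows "\<H>(X) = - (\<Sum>v\<in>X ` space M. prob (X -` {v} \<inter> space M) * log b (prob (X -` {v} \<inter> space M)))"
  using entropy_simple_distributed[OF simple_distributedI[OF assms measure_nonneg refl]] .

lemma entropy_cong:
  assumes "\<And>x. x \<in> space M \<Longrightarrow> X x = Y x"
  shows "\<H>(X) = \<H>(Y)"
proof -
  have img: "X ` space M = Y ` space M" using assms by (rule image_cong[OF refl])
  have "distr M (count_space (Y ` space M)) X = distr M (count_space (Y ` space M)) Y"
    by (rule distr_cong) (simp_all add: assms)
  then show ?thesis unfolding entropy_def img by simp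
qed

lemma entropy_le_if_factors:
  assumes "simple_function M Y" "\<And>x. x \<in> space M \<Longrightarrow> X x = f (Y x)"
  shows "\<H>(X) \<le> \<H>(Y)"
proof -
  have "\<H>(X) = \<H>(f \<circ> Y)" using assms(2) by (intro entropy_cong) simp
  also have "\<dots> \<le> \<H>(Y)" using assms(1) by (rule entropy_data_processing)
  finally show ?thesis .
qed

lemma entropy_const:
  assumes "\<And>x. x \<in> space M \<Longrightarrow> X x = c"
  shows "\<H>(X) = 0"
proof -
  have img: "X ` space M = {c}" and vimage: "X -` {c} \<inter> space M = space M"
    using assms not_empty by auto
  then have "simple_function M X" by (simp add: simple_function_def)
  then show ?thesis using entropy_simple_function[of X] by (simp add: img vimage prob_space)
qed

lemma entropy_pair_le:
  assumes "simple_function M X" "simple_function M Y"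
  shows "\<H>(\<lambda>x. (X x, Y x)) \<le> \<H>(X) + \<H>(Y)"
  using entropy_chain_rule[OF assms] conditional_entropy_less_eq_entropy[OF assms(2,1)] by simp

lemma entropy_comp_measure_preserving:
  assumes X: "simple_function M X" and T: "T \<in> M \<rightarrow>\<^sub>M M" "distr M M T = M"
  shows "\<H>(X \<circ> T) = \<H>(X)"
proof -
  define p where "p v = prob (X -` {v} \<inter> space M)" for v
  have XT: "simple_function M (X \<circ> T)"
    using simple_function_comp[OF T(1) X] by (simp add: comp_def)
  have vimage: "(X \<circ> T) -` {v} \<inter> space M = T -` (X -` {v} \<inter> space M) \<inter> space M" for v
    using measurable_space[OF T(1)] by auto
  have prob_XT: "prob ((X \<circ> T) -` {v} \<inter> space M) = p v" for v
  proof -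
    have "prob ((X \<circ> T) -` {v} \<inter> space M) = measure (distr M M T) (X -` {v} \<inter> space M)"
      unfolding vimage using X T(1) by (simp add: measure_distr simple_functionD(2))
    then show ?thesis unfolding T(2) p_def .
  qed
  have "(X \<circ> T) ` space M \<subseteq> X ` space M"
    using measurable_space[OF T(1)] by auto
  moreover have "p v = 0" if "v \<notin> (X \<circ> T) ` space M" for v
  proof -
    have "(X \<circ> T) -` {v} \<inter> space M = {}" using that by auto
    then show ?thesis using prob_XT[of v] by simp
  qed
  ultimately have "(\<Sum>v\<in>(X \<circ> T) ` space M. p v * log b (p v)) = (\<Sum>v\<in>X ` space M. p v * log b (p v))"
    using X by (intro sum.mono_neutral_left) (auto simp: simple_functionD(1))
  then show ?thesis
    unfolding entropy_simple_function[OF XT] entropy_simple_function[OF X] prob_XT p_def by simp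
qed

end

lemma (in information_space) part_entropy_vimages:
  assumes X: "simple_function M X" and V: "finite V" "X ` space M \<subseteq> V"
  shows "part_entropy M ((\<lambda>v. X -` {v} \<inter> space M) ` V) = ln b * \<H>(X)"
proof -
  define E where "E v = X -` {v} \<inter> space M" for v
  define \<phi> where "\<phi> A = measure M A * ln (measure M A)" for A
  have "(\<Sum>A\<in>E ` V. \<phi> A) = (\<Sum>A\<in>E ` (X ` space M). \<phi> A)"
  proof (rule sum.mono_neutral_right)
    show "\<forall>A\<in>E ` V - E ` (X ` space M). \<phi> A = 0"
    proof
      fix A assume "A \<in> E ` V - E ` (X ` space M)"
      then obtain v where "A = E v" "v \<notin> X ` space M" by blast
      then have "A = {}" unfolding E_def by auto
      then show "\<phi> A = 0" by (simp add: \<phi>_def)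
    qed
  qed (use V in auto)
  also have "\<dots> = (\<Sum>v\<in>X ` space M. \<phi> (E v))"
  proof (rule sum.reindex[unfolded comp_def], rule inj_onI)
    fix v w assume "v \<in> X ` space M" "E v = E w"
    then obtain x where "x \<in> space M" "X x = v" "x \<in> E w" unfolding E_def by blast
    then show "v = w" unfolding E_def by simp
  qed
  finally show ?thesis
    unfolding part_entropy_def entropy_simple_function[OF X] \<phi>_def E_def
    using b_gt_1 by (simp add: log_def sum_distrib_left)
qed

section \<open>Itineraries of a measure-preserving system\<close>

definition partition_cell :: "'a set set \<Rightarrow> 'a \<Rightarrow> 'a set" where
  "partition_cell \<alpha> x = (THE A. A \<in> \<alpha> \<and> x \<in> A)"

definition itinerary :: "('a \<Rightarrow> 'a) \<Rightarrow> 'a set set \<Rightarrow> nat set \<Rightarrow> 'a \<Rightarrow> nat \<Rightarrow> 'a set" where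
  "itinerary T \<alpha> S x = restrict (\<lambda>i. partition_cell \<alpha> ((T ^^ i) x)) S"

lemma partition_cell_eqI:
  assumes "disjoint \<alpha>" "A \<in> \<alpha>" "x \<in> A"
  shows "partition_cell \<alpha> x = A"
  unfolding partition_cell_def using assms by (intro the_equality) (auto simp: disjoint_def)

lemma partition_cell_mem:
  assumes "fin_meas_partition M \<alpha>" "x \<in> space M"
  shows "partition_cell \<alpha> x \<in> \<alpha>" "x \<in> partition_cell \<alpha> x"
proof -
  obtain A where "A \<in> \<alpha>" "x \<in> A"
    using assms unfolding fin_meas_partition_def by blast
  moreover have "partition_cell \<alpha> x = A"
    using assms(1) calculation by (intro partition_cell_eqI) (auto simp: fin_meas_partition_def)
  ultimately show "partition_cell \<alpha> x \<in> \<alpha>" "x \<in> partition_cell \<alpha> x" by simp_all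
qed

lemma partition_cell_eq_iff:
  assumes "fin_meas_partition M \<alpha>" "x \<in> space M" "A \<in> \<alpha>"
  shows "partition_cell \<alpha> x = A \<longleftrightarrow> x \<in> A"
  using assms partition_cell_mem[OF assms(1,2)] partition_cell_eqI[of \<alpha> A x]
  by (auto simp: fin_meas_partition_def)

locale mps_system = information_space +
  fixes T :: "'a \<Rightarrow> 'a"
  assumes mps: "mps M T" and natural_base: "b = exp 1"
begin

lemma measurable_funpow: "T ^^ k \<in> M \<rightarrow>\<^sub>M M"
proof (induction k)
  case (Suc k)
  have "T \<in> M \<rightarrow>\<^sub>M M" using mps by (simp add: mps_def)
  with Suc show ?case by (simp add: measurable_comp)
qed simp

lemma funpow_in_space: "x \<in> space M \<Longrightarrow> (T ^^ k) x \<in> space M"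
  using measurable_space[OF measurable_funpow] .

lemma distr_funpow: "distr M M (T ^^ k) = M"
proof (induction k)
  case (Suc k)
  have T: "T \<in> M \<rightarrow>\<^sub>M M" "distr M M T = M" using mps by (simp_all add: mps_def)
  have "distr M M (T ^^ Suc k) = distr (distr M M T) M (T ^^ k)"
    unfolding funpow_Suc_right by (rule distr_distr[OF measurable_funpow T(1), symmetric])
  also have "\<dots> = M" using Suc T(2) by simp
  finally show ?case .
qed simp

lemma funpow_funpow_apply: "(T ^^ j) ((T ^^ i) x) = (T ^^ (i + j)) x"
  by (metis add.commute funpow_add comp_apply)

context
  fixes \<alpha> assumes \<alpha>: "fin_meas_partition M \<alpha>"
begin

lemma itinerary_in_PiE: "x \<in> space M \<Longrightarrow> itinerary T \<alpha> S x \<in> S \<rightarrow>\<^sub>E \<alpha>"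
  unfolding itinerary_def using partition_cell_mem(1)[OF \<alpha> funpow_in_space] by auto

lemma vimage_itinerary:
  assumes "v \<in> S \<rightarrow>\<^sub>E \<alpha>"
  shows "itinerary T \<alpha> S -` {v} \<inter> space M = space M \<inter> (\<Inter>i\<in>S. (T ^^ i) -` v i)"
proof -
  have "itinerary T \<alpha> S x = v \<longleftrightarrow> (\<forall>i\<in>S. (T ^^ i) x \<in> v i)" if "x \<in> space M" for x
    using assms partition_cell_eq_iff[OF \<alpha> funpow_in_space[OF that]]
    by (auto simp: itinerary_def PiE_iff extensional_def fun_eq_iff)
  then show ?thesis by auto
qed

lemma sets_vimage_itinerary:
  assumes "finite S"
  shows "itinerary T \<alpha> S -` {v} \<inter> space M \<in> sets M"
proof (cases "v \<in> S \<rightarrow>\<^sub>E \<alpha> \<and> S \<noteq> {}")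
  case True
  then have "itinerary T \<alpha> S -` {v} \<inter> space M = (\<Inter>i\<in>S. (T ^^ i) -` v i \<inter> space M)"
    by (auto simp: vimage_itinerary)
  also have "\<dots> \<in> sets M"
    using True assms \<alpha> unfolding fin_meas_partition_def
    by (intro sets.finite_INT measurable_sets[OF measurable_funpow]) auto
  finally show ?thesis .
next
  case False
  then consider "v \<notin> S \<rightarrow>\<^sub>E \<alpha>" | "S = {}" by blast
  then show ?thesis
  proof cases
    case 1
    then have "itinerary T \<alpha> S -` {v} \<inter> space M = {}" using itinerary_in_PiE by blast
    then show ?thesis by simp
  next
    case 2
    then have "itinerary T \<alpha> S = (\<lambda>_ _. undefined)" by (simp add: itinerary_def fun_eq_iff)
    then show ?thesis by (cases "v = (\<lambda>_. undefined)") auto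
  qed
qed

lemma finite_PiE_partition: "finite S \<Longrightarrow> finite (S \<rightarrow>\<^sub>E \<alpha>)"
  using \<alpha> by (intro finite_PiE) (auto simp: fin_meas_partition_def)

lemma simple_function_itinerary:
  assumes "finite S"
  shows "simple_function M (itinerary T \<alpha> S)"
proof -
  have "itinerary T \<alpha> S ` space M \<subseteq> S \<rightarrow>\<^sub>E \<alpha>" using itinerary_in_PiE by blast
  then have "finite (itinerary T \<alpha> S ` space M)"
    using finite_PiE_partition[OF assms] by (rule finite_subset)
  then show ?thesis
    unfolding simple_function_def using sets_vimage_itinerary[OF assms] by blast
qed

lemma join_part_eq_vimages:
  "join_part M T \<alpha> S = (\<lambda>v. itinerary T \<alpha> S -` {v} \<inter> space M) ` (S \<rightarrow>\<^sub>E \<alpha>)"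
  unfolding join_part_def by (auto simp: vimage_itinerary)

lemma part_entropy_join_part:
  assumes "finite S"
  shows "part_entropy M (join_part M T \<alpha> S) = \<H>(itinerary T \<alpha> S)"
  unfolding join_part_eq_vimages using itinerary_in_PiE
  by (subst part_entropy_vimages) (auto intro: simple_function_itinerary finite_PiE_partition assms
      simp: natural_base)

lemma fin_meas_partition_join_part:
  assumes "finite S"
  shows "fin_meas_partition M (join_part M T \<alpha> S)"
  unfolding fin_meas_partition_def
proof (intro conjI)
  show "finite (join_part M T \<alpha> S)"
    unfolding join_part_eq_vimages using finite_PiE_partition[OF assms] by simp
  show "join_part M T \<alpha> S \<subseteq> sets M"
    unfolding join_part_eq_vimages using sets_vimage_itinerary[OF assms] by (simp add: image_subset_iff)
  show "disjoint (join_part M T \<alpha> S)"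
    unfolding join_part_eq_vimages
  proof (rule disjointI)
    fix A B assume "A \<in> (\<lambda>v. itinerary T \<alpha> S -` {v} \<inter> space M) ` (S \<rightarrow>\<^sub>E \<alpha>)"
      "B \<in> (\<lambda>v. itinerary T \<alpha> S -` {v} \<inter> space M) ` (S \<rightarrow>\<^sub>E \<alpha>)" "A \<noteq> B"
    then obtain v w where "A = itinerary T \<alpha> S -` {v} \<inter> space M"
      "B = itinerary T \<alpha> S -` {w} \<inter> space M" "v \<noteq> w" by auto
    then show "A \<inter> B = {}" by auto
  qed
  show "\<Union> (join_part M T \<alpha> S) = space M"
  proof
    show "\<Union> (join_part M T \<alpha> S) \<subseteq> space M" unfolding join_part_def by auto
    show "space M \<subseteq> \<Union> (join_part M T \<alpha> S)"
    proof
      fix x assume x: "x \<in> space M"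
      show "x \<in> \<Union> (join_part M T \<alpha> S)"
        unfolding join_part_eq_vimages using x by (intro UnionI[OF imageI[OF itinerary_in_PiE[OF x]]]) simp
    qed
  qed
qed

lemma partition_cell_join_part:
  assumes "finite S" "y \<in> space M"
  shows "partition_cell (join_part M T \<alpha> S) y = itinerary T \<alpha> S -` {itinerary T \<alpha> S y} \<inter> space M"
proof (rule partition_cell_eqI)
  show "disjoint (join_part M T \<alpha> S)"
    using fin_meas_partition_join_part[OF assms(1)] by (simp add: fin_meas_partition_def)
  show "itinerary T \<alpha> S -` {itinerary T \<alpha> S y} \<inter> space M \<in> join_part M T \<alpha> S"
    unfolding join_part_eq_vimages by (rule imageI[OF itinerary_in_PiE[OF assms(2)]])
qed (use assms(2) in simp)

lemma entropy_itinerary_shift: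
  assumes S: "finite S"
  shows "\<H>(itinerary T \<alpha> ((+) k ` S)) = \<H>(itinerary T \<alpha> S)"
proof -
  define shift where "shift v = (\<lambda>i. if i \<in> (+) k ` S then v (i - k) else undefined)" for v :: "nat \<Rightarrow> 'a set"
  define Y where "Y = itinerary T \<alpha> S \<circ> (T ^^ k)"
  have Y: "simple_function M Y"
    unfolding Y_def using simple_function_comp[OF measurable_funpow simple_function_itinerary[OF S]]
    by (simp add: comp_def)
  have Y_PiE: "Y x \<in> S \<rightarrow>\<^sub>E \<alpha>" if "x \<in> space M" for x
    using itinerary_in_PiE[OF funpow_in_space[OF that]] by (simp add: Y_def)
  have "itinerary T \<alpha> ((+) k ` S) x i = shift (Y x) i" for x i
  proof (cases "i \<in> (+) k ` S")
    case True
    then obtain j where "j \<in> S" "i = k + j" by blast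
    then show ?thesis by (simp add: itinerary_def shift_def Y_def funpow_funpow_apply)
  qed (simp add: itinerary_def shift_def)
  then have "\<H>(itinerary T \<alpha> ((+) k ` S)) = \<H>(shift \<circ> Y)"
    by (intro entropy_cong) (simp add: fun_eq_iff)
  also have "\<dots> = \<H>(Y)"
  proof (rule entropy_of_inj[OF Y], rule inj_onI)
    fix v w assume "v \<in> Y ` space M" "w \<in> Y ` space M" and eq: "shift v = shift w"
    then have "v \<in> S \<rightarrow>\<^sub>E \<alpha>" "w \<in> S \<rightarrow>\<^sub>E \<alpha>" using Y_PiE by auto
    moreover have "v i = w i" if "i \<in> S" for i
      using fun_cong[OF eq, of "k + i"] that by (simp add: shift_def)
    ultimately show "v = w" by (rule PiE_ext)
  qed
  also have "\<dots> = \<H>(itinerary T \<alpha> S)"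
    unfolding Y_def by (intro entropy_comp_measure_preserving simple_function_itinerary[OF S]
        measurable_funpow distr_funpow)
  finally show ?thesis .
qed

lemma stationary_subadditive_entropy_itinerary:
  "stationary_subadditive (\<lambda>S. \<H>(itinerary T \<alpha> S))"
proof
  show "\<H>(itinerary T \<alpha> {}) = 0"
    by (rule entropy_const[of _ "\<lambda>_. undefined"]) (simp add: itinerary_def fun_eq_iff)
  show "\<H>(itinerary T \<alpha> A) \<le> \<H>(itinerary T \<alpha> B)" if "finite B" "A \<subseteq> B" for A B
    using that by (intro entropy_le_if_factors[OF simple_function_itinerary, of _ _ "\<lambda>v. restrict v A"])
      (auto simp: itinerary_def fun_eq_iff)
  show "\<H>(itinerary T \<alpha> (A \<union> B)) \<le> \<H>(itinerary T \<alpha> A) + \<H>(itinerary T \<alpha> B)"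
    if "finite A" "finite B" for A B
  proof -
    note simple = simple_function_itinerary[OF that(1)] simple_function_itinerary[OF that(2)]
    have "\<H>(itinerary T \<alpha> (A \<union> B)) \<le> \<H>(\<lambda>x. (itinerary T \<alpha> A x, itinerary T \<alpha> B x))"
      by (rule entropy_le_if_factors[OF simple_function_Pair[OF simple],
            of _ "\<lambda>(u, v) i. if i \<in> A then u i else if i \<in> B then v i else undefined"])
        (auto simp: itinerary_def fun_eq_iff)
    also have "\<dots> \<le> \<H>(itinerary T \<alpha> A) + \<H>(itinerary T \<alpha> B)"
      by (rule entropy_pair_le[OF simple])
    finally show ?thesis .
  qed
  show "\<H>(itinerary T \<alpha> ((+) k ` A)) = \<H>(itinerary T \<alpha> A)" if "finite A" for A k
    using that by (rule entropy_itinerary_shift)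
qed

end

context
  fixes \<alpha> assumes \<alpha>: "fin_meas_partition M \<alpha>"
begin

lemma itinerary_window_funpow:
  assumes "i \<in> S"
  shows "itinerary T \<alpha> {0..<k} ((T ^^ i) x) = (\<lambda>j. if j < k then itinerary T \<alpha> (widen S k) x (i + j) else undefined)"
  using assms by (auto simp: itinerary_def funpow_funpow_apply mem_widen_iff fun_eq_iff)

lemma partition_cell_join_part_funpow:
  assumes "x \<in> space M"
  shows "partition_cell (join_part M T \<alpha> {0..<k}) ((T ^^ i) x)
    = itinerary T \<alpha> {0..<k} -` {itinerary T \<alpha> {0..<k} ((T ^^ i) x)} \<inter> space M"
  by (rule partition_cell_join_part[OF \<alpha> _ funpow_in_space[OF assms]]) simp

text \<open>A cell of the join of \<alpha> over {0..<k} visited at time i records the \<alpha>-cells visited at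
  times i, ..., i + k - 1; hence the itineraries in the two partitions determine each other.\<close>

lemma entropy_itinerary_join_part_le:
  assumes S: "finite S"
  shows "\<H>(itinerary T (join_part M T \<alpha> {0..<k}) S) \<le> \<H>(itinerary T \<alpha> (widen S k))"
proof (rule entropy_le_if_factors[OF simple_function_itinerary[OF \<alpha> finite_widen[OF S]]])
  fix x assume x: "x \<in> space M"
  show "itinerary T (join_part M T \<alpha> {0..<k}) S x
      = (\<lambda>v i. if i \<in> S then itinerary T \<alpha> {0..<k} -` {\<lambda>j. if j < k then v (i + j) else undefined} \<inter> space M
                else undefined) (itinerary T \<alpha> (widen S k) x)"
    by (auto simp: fun_eq_iff itinerary_def[of T "join_part M T \<alpha> {0..<k}"]
        partition_cell_join_part_funpow[OF x] itinerary_window_funpow)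
qed

lemma entropy_itinerary_widen_le:
  assumes S: "finite S"
  shows "\<H>(itinerary T \<alpha> (widen S k)) \<le> \<H>(itinerary T (join_part M T \<alpha> {0..<k}) S)"
proof -
  let ?\<beta> = "join_part M T \<alpha> {0..<k}" and ?J = "itinerary T \<alpha> {0..<k}"
  let ?I = "itinerary T \<alpha> (widen S k)"
  define anchor where "anchor m = (SOME i. i \<in> S \<and> i \<le> m \<and> m < i + k)" for m
  have anchor: "anchor m \<in> S" "anchor m \<le> m" "m < anchor m + k" if "m \<in> widen S k" for m
    using someI_ex[of "\<lambda>i. i \<in> S \<and> i \<le> m \<and> m < i + k"] that
    unfolding anchor_def mem_widen_iff by blast+
  have \<beta>: "fin_meas_partition M ?\<beta>"
    by (rule fin_meas_partition_join_part[OF \<alpha>]) simp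
  show ?thesis
  proof (rule entropy_le_if_factors[OF simple_function_itinerary[OF \<beta> S]])
    fix x assume x: "x \<in> space M"
    have "?I x m = (if m \<in> widen S k then ?J (SOME z. z \<in> itinerary T ?\<beta> S x (anchor m)) (m - anchor m)
        else undefined)" for m
    proof (cases "m \<in> widen S k")
      case True
      define y where "y = (T ^^ anchor m) x"
      have "itinerary T ?\<beta> S x (anchor m) = ?J -` {?J y} \<inter> space M"
        using anchor(1)[OF True] by (simp add: itinerary_def y_def partition_cell_join_part_funpow[OF x])
      moreover have "y \<in> ?J -` {?J y} \<inter> space M"
        using funpow_in_space[OF x] by (simp add: y_def)
      then have "?J (SOME z. z \<in> ?J -` {?J y} \<inter> space M) = ?J y"
        by (rule someI2) simp
      moreover have "m - anchor m < k" "anchor m + (m - anchor m) = m"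
        using anchor[OF True] by auto
      then have "?J y (m - anchor m) = ?I x m"
        using itinerary_window_funpow[OF anchor(1)[OF True], where x = x and k = k] by (simp add: y_def)
      ultimately show ?thesis using True by simp
    qed (simp add: itinerary_def)
    then show "?I x = (\<lambda>V m. if m \<in> widen S k then ?J (SOME z. z \<in> V (anchor m)) (m - anchor m)
        else undefined) (itinerary T ?\<beta> S x)"
      by (simp add: fun_eq_iff)
  qed
qed

lemma entropy_itinerary_join_part:
  assumes "finite S"
  shows "\<H>(itinerary T (join_part M T \<alpha> {0..<k}) S) = \<H>(itinerary T \<alpha> (widen S k))"
  using assms by (intro antisym entropy_itinerary_join_part_le entropy_itinerary_widen_le)

lemma part_dyn_entropy_eq_block_rate:
  "part_dyn_entropy M T \<alpha> = block_rate (\<lambda>S. \<H>(itinerary T \<alpha> S))"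
  unfolding part_dyn_entropy_def block_rate_def by (simp add: part_entropy_join_part[OF \<alpha>])

lemma intricacy_eq_rates:
  "intricacy M T (\<lambda>n S. 2 powr (- real n)) \<alpha>
     = 2 * mean_rate (\<lambda>S. \<H>(itinerary T \<alpha> S)) - block_rate (\<lambda>S. \<H>(itinerary T \<alpha> S))"
proof -
  interpret stationary_subadditive "\<lambda>S. \<H>(itinerary T \<alpha> S)"
    by (rule stationary_subadditive_entropy_itinerary[OF \<alpha>])
  have "(\<Sum>S\<in>Pow {0..<n}. 2 powr (- real n) *
          (part_entropy M (join_part M T \<alpha> S) + part_entropy M (join_part M T \<alpha> ({0..<n} - S))
           - part_entropy M (join_part M T \<alpha> {0..<n})))
      = (\<Sum>S\<in>Pow {0..<n}. 2 powr (- real n) *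
          (\<H>(itinerary T \<alpha> S) + \<H>(itinerary T \<alpha> ({0..<n} - S)) - \<H>(itinerary T \<alpha> {0..<n})))" for n
    by (intro sum.cong) (auto simp: part_entropy_join_part[OF \<alpha>] finite_subset)
  then show ?thesis
    unfolding intricacy_def by (simp only:) (rule limI[OF intricacy_term_LIMSEQ])
qed

end

lemma intricacy_le_part_dyn_entropy:
  assumes \<alpha>: "fin_meas_partition M \<alpha>"
  shows "intricacy M T (\<lambda>n S. 2 powr (- real n)) \<alpha> \<le> part_dyn_entropy M T \<alpha>"
proof -
  interpret stationary_subadditive "\<lambda>S. \<H>(itinerary T \<alpha> S)"
    by (rule stationary_subadditive_entropy_itinerary[OF \<alpha>])
  show ?thesis
    unfolding intricacy_eq_rates[OF \<alpha>] part_dyn_entropy_eq_block_rate[OF \<alpha>]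
    using mean_rate_le_block_rate by simp
qed

lemma part_dyn_entropy_approx_by_intricacy:
  assumes \<alpha>: "fin_meas_partition M \<alpha>" and e: "0 < e"
  shows "\<exists>\<beta>\<in>{\<beta>. fin_meas_partition M \<beta>}.
           part_dyn_entropy M T \<alpha> < intricacy M T (\<lambda>n S. 2 powr (- real n)) \<beta> + e"
proof -
  interpret stationary_subadditive "\<lambda>S. \<H>(itinerary T \<alpha> S)"
    by (rule stationary_subadditive_entropy_itinerary[OF \<alpha>])
  obtain k :: nat where "2 * \<H>(itinerary T \<alpha> {0}) / e < 2 ^ k"
    using real_arch_pow[of 2] by auto
  then have k: "2 * \<H>(itinerary T \<alpha> {0}) / 2 ^ k < e"
    using e by (simp add: divide_less_eq mult.commute)
  define \<beta> where "\<beta> = join_part M T \<alpha> {0..<k}"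
  have \<beta>: "fin_meas_partition M \<beta>"
    unfolding \<beta>_def by (rule fin_meas_partition_join_part[OF \<alpha>]) simp
  have "part_dyn_entropy M T \<alpha> - 2 * \<H>(itinerary T \<alpha> {0}) / 2 ^ k
      \<le> intricacy M T (\<lambda>n S. 2 powr (- real n)) \<beta>"
    unfolding part_dyn_entropy_eq_block_rate[OF \<alpha>] intricacy_eq_rates[OF \<beta>]
    by (rule intricacy_widen_lower_bound) (simp add: \<beta>_def entropy_itinerary_join_part[OF \<alpha>])
  with \<beta> k show ?thesis by (intro bexI[of _ \<beta>]) auto
qed

end

theorem corollary5p8:
  fixes M :: "'a measure" and T :: "'a \<Rightarrow> 'a"
  assumes "mps M T"
  shows "(SUP \<alpha>\<in>{\<alpha>. fin_meas_partition M \<alpha>}.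
            ereal (intricacy M T (\<lambda>n S. 2 powr (- real n)) \<alpha>)) = ks_entropy M T"
proof -
  have "prob_space M" using assms unfolding mps_def by blast
  then interpret information_space M "exp 1"
    by (simp add: information_space_def information_space_axioms_def)
  interpret mps_system M "exp 1" T
    by unfold_locales (simp_all add: assms)
  show ?thesis
    unfolding ks_entropy_def
    by (rule SUP_ereal_eq_if_approximates)
      (blast intro: intricacy_le_part_dyn_entropy part_dyn_entropy_approx_by_intricacy)+
qed

end
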